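(* Let $\varphi$ be a quantifier-free formula in the SMT theory of bit-vectors and let $\mathit{cost}$ be a bit-vector variable of width $n$ occurring in $\varphi$, interpreted either as unsigned or as signed (two's complement). Consider the problem of minimizing (resp. maximizing) $\mathit{cost}$ subject to $\varphi$, i.e. finding a model $\mathcal{M}$ of $\varphi$ whose value $\mathcal{M}(\mathit{cost})$ is minimum (resp. maximum) among all models of $\varphi$ with respect to the unsigned order if $\mathit{cost}$ is unsigned and the signed (two's complement) order if $\mathit{cost}$ is signed. Let $\mathit{attr}$ be the attractor of $\mathit{cost}$ and $A=[A[0],\dots,A[n-1]]$ the vector of attractor equalities. Then any model $\mathcal{M}$ of $\varphi$ which lexicographically maximizes $A$ with respect to $\varphi$ is an optimal solution of this problem, i.e. $\mathcal{M}(\mathit{cost})$ is minimum (resp. maximum) among the values of $\mathit{cost}$ in models of $\varphi$.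
   Context: Bits of $\mathit{cost}$ are indexed from the most significant bit $\mathit{cost}[0]$ to the least significant bit $\mathit{cost}[n-1]$. An unsigned $n$-bit vector has value $\sum_{k=0}^{n-1}2^{n-1-k}\,\mathit{cost}[k]\in[0,2^n-1]$; a signed one has value $-2^{n-1}\mathit{cost}[0]+\sum_{k=1}^{n-1}2^{n-1-k}\mathit{cost}[k]\in[-2^{n-1},2^{n-1}-1]$. When minimizing (resp. maximizing), the attractor $\mathit{attr}$ is the smallest (resp. greatest) bit-vector value of the sort of $\mathit{cost}$ (e.g. $[0\dots0]$ for unsigned minimization, $[10\dots0]$ for signed minimization, $[1\dots1]$ for unsigned maximization, $[01\dots1]$ for signed maximization). The vector of attractor equalities is $A$ with $A[k]:=(\mathit{cost}[k]=\mathit{attr}[k])$ for $k\in[0..n-1]$. For an assignment $\tau_n$ to all bits of $\mathit{cost}$ and $i\le n$, $\tau_n|_i$ denotes its restriction to the bits $\mathit{cost}[0],\dots,\mathit{cost}[i-1]$ (viewed as a conjunction of bit literals). An assignment $\tau_n$ to $\mathit{cost}$ lexicographically maximizes $A$ with respect to $\varphi$ iff for every $k\in[0..n-1]$: $\tau_n[k]=\overline{\mathit{attr}[k]}$ (the complement bit) if $\varphi\wedge\tau_n|_k\wedge A[k]$ is unsatisfiable, and $\tau_n[k]=\mathit{attr}[k]$ otherwise. A model $\mathcal{M}$ of $\varphi$ lexicographically maximizes $A$ with respect to $\varphi$ iff its restriction to the bits of $\mathit{cost}$ does. *)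

theory Defs
  imports Main
begin

text \<open>Bit-vectors of width n are lists of booleans of length n; bit 0 (head) is the
most significant bit.\<close>

datatype signedness = Unsigned | Signed
datatype direction = Minimize | Maximize

definition bit_val :: "bool \<Rightarrow> int" where
  "bit_val b = (if b then 1 else 0)"

definition bv_val :: "signedness \<Rightarrow> bool list \<Rightarrow> int" where
  "bv_val s bs = (let n = length bs in
     (case s of
        Unsigned \<Rightarrow> (\<Sum>k<n. 2 ^ (n - 1 - k) * bit_val (bs ! k))
      | Signed \<Rightarrow> - (2 ^ (n - 1)) * bit_val (bs ! 0)
                  + (\<Sum>k\<in>{1..<n}. 2 ^ (n - 1 - k) * bit_val (bs ! k))))"

definition better_eq :: "signedness \<Rightarrow> direction \<Rightarrow> bool list \<Rightarrow> bool list \<Rightarrow> bool" where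
  "better_eq s d v w = (case d of
      Minimize \<Rightarrow> bv_val s v \<le> bv_val s w
    | Maximize \<Rightarrow> bv_val s v \<ge> bv_val s w)"

definition attractor :: "signedness \<Rightarrow> direction \<Rightarrow> nat \<Rightarrow> bool list" where
  "attractor s d n = (SOME a. length a = n \<and>
       (\<forall>w. length w = n \<longrightarrow> better_eq s d a w))"

text \<open>Abstract view of a formula: phi is the set of its models (of type 'm), and
cost M is the bit-vector value of the variable cost in model M.
Satisfiability of phi /\ tau|_k /\ A[k].\<close>
definition sat_prefix_attr ::
  "signedness \<Rightarrow> direction \<Rightarrow> nat \<Rightarrow> ('m \<Rightarrow> bool) \<Rightarrow> ('m \<Rightarrow> bool list) \<Rightarrow> bool list \<Rightarrow> nat \<Rightarrow> bool" where
  "sat_prefix_attr s d n phi cost tau k =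
     (\<exists>M'. phi M' \<and> take k (cost M') = take k tau \<and> cost M' ! k = attractor s d n ! k)"

definition lex_max_assignment ::
  "signedness \<Rightarrow> direction \<Rightarrow> nat \<Rightarrow> ('m \<Rightarrow> bool) \<Rightarrow> ('m \<Rightarrow> bool list) \<Rightarrow> bool list \<Rightarrow> bool" where
  "lex_max_assignment s d n phi cost tau =
     (length tau = n \<and>
      (\<forall>k<n. (\<not> sat_prefix_attr s d n phi cost tau k \<longrightarrow> tau ! k = (\<not> attractor s d n ! k))
           \<and> (sat_prefix_attr s d n phi cost tau k \<longrightarrow> tau ! k = attractor s d n ! k)))"

definition lex_max_model ::
  "signedness \<Rightarrow> direction \<Rightarrow> nat \<Rightarrow> ('m \<Rightarrow> bool) \<Rightarrow> ('m \<Rightarrow> bool list) \<Rightarrow> 'm \<Rightarrow> bool" where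
  "lex_max_model s d n phi cost M = lex_max_assignment s d n phi cost (cost M)"

definition optimal ::
  "signedness \<Rightarrow> direction \<Rightarrow> ('m \<Rightarrow> bool) \<Rightarrow> ('m \<Rightarrow> bool list) \<Rightarrow> 'm \<Rightarrow> bool" where
  "optimal s d phi cost M = (phi M \<and> (\<forall>M'. phi M' \<longrightarrow> better_eq s d (cost M) (cost M')))"

end

theory Submission
  imports Defs
begin

text \<open>Write \<oplus> for bitwise exclusive or. On width-n vectors the objective measured from the
attractor, val v - val attr for minimisation and val attr - val v for maximisation, is exactly
the unsigned value of v \<oplus> attr. A model lexicographically maximising the attractor
equalities lexicographically minimises cost \<oplus> attr, and for unsigned values the lexicographic
order of bits is the numeric order.\<close>

fun uval :: "bool list \<Rightarrow> int" where
  "uval [] = 0"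
| "uval (b # bs) = bit_val b * 2 ^ length bs + uval bs"

lemma uval_nonneg: "0 \<le> uval bs"
  by (induction bs) (auto simp: bit_val_def)

lemma uval_less_power: "uval bs < 2 ^ length bs"
proof (induction bs)
  case (Cons b bs)
  have "uval (b # bs) \<le> 2 ^ length bs + uval bs" by (simp add: bit_val_def)
  moreover have "(2::int) ^ length (b # bs) = 2 * 2 ^ length bs" by simp
  ultimately show ?case using Cons by linarith
qed simp

lemma uval_eq_sum: "uval bs = (\<Sum>k<length bs. 2 ^ (length bs - 1 - k) * bit_val (bs ! k))"
proof (induction bs)
  case (Cons b bs)
  then show ?case
    unfolding sum.lessThan_Suc_shift length_Cons by (simp add: algebra_simps)
qed simp

lemma bv_val_Unsigned: "bv_val Unsigned bs = uval bs"
  by (simp add: bv_val_def uval_eq_sum Let_def)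

lemma bv_val_Signed_Cons: "bv_val Signed (b # bs) = - (2 ^ length bs) * bit_val b + uval bs"
proof -
  have "(\<Sum>k\<in>{1..<Suc (length bs)}. 2 ^ (length bs - k) * bit_val ((b # bs) ! k))
      = (\<Sum>k\<in>{0..<length bs}. 2 ^ (length bs - Suc k) * bit_val ((b # bs) ! Suc k))"
    using sum.shift_bounds_Suc_ivl[of "\<lambda>k. 2 ^ (length bs - k) * bit_val ((b # bs) ! k)" 0 "length bs"]
    by simp
  also have "\<dots> = uval bs" by (simp add: uval_eq_sum atLeast0LessThan)
  finally show ?thesis by (simp add: bv_val_def Let_def)
qed

lemma uval_replicate_False [simp]: "uval (replicate n False) = 0"
  by (induction n) (simp_all add: bit_val_def)

lemma uval_map_Not: "uval (map Not bs) = 2 ^ length bs - 1 - uval bs"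
  by (induction bs) (auto simp: bit_val_def)

lemma uval_less_if_first_difference:
  assumes "length v = length w" "k < length v" "take k v = take k w" "\<not> v ! k" "w ! k"
  shows "uval v < uval w"
  using assms
proof (induction v arbitrary: w k)
  case Nil
  then show ?case by simp
next
  case (Cons x r)
  then obtain y r' where w: "w = y # r'" by (cases w) auto
  show ?case
  proof (cases k)
    case 0
    then show ?thesis using Cons.prems w uval_less_power[of r] uval_nonneg[of r']
      by (auto simp: bit_val_def)
  next
    case (Suc j)
    then have "uval r < uval r'" using Cons.prems w by (intro Cons.IH) auto
    then show ?thesis using Cons.prems w Suc by auto
  qed
qed

lemma first_difference:
  assumes "length v = length w" "v \<noteq> w"
  obtains k where "k < length v" "take k v = take k w" "v ! k \<noteq> w ! k"
  using assms
proof (induction v arbitrary: w thesis)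
  case Nil
  then show ?case by simp
next
  case (Cons x r)
  from Cons.prems(2) obtain y r' where w: "w = y # r'" by (cases w) auto
  show ?case
  proof (cases "x = y")
    case True
    then have "length r = length r'" "r \<noteq> r'" using Cons.prems w by auto
    then obtain k where "k < length r" "take k r = take k r'" "r ! k \<noteq> r' ! k"
      using Cons.IH by blast
    then show ?thesis using Cons.prems(1)[of "Suc k"] w True by auto
  next
    case False
    then show ?thesis using Cons.prems(1)[of 0] w by auto
  qed
qed

lemma uval_inject:
  assumes "length v = length w" "uval v = uval w"
  shows "v = w"
proof (rule ccontr)
  assume "v \<noteq> w"
  then obtain k where "k < length v" "take k v = take k w" "v ! k \<noteq> w ! k"
    using first_difference[OF assms(1)] by blast
  then have "uval v < uval w \<or> uval w < uval v"
    using assms(1) uval_less_if_first_difference[of v w k] uval_less_if_first_difference[of w v k]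
    by (cases "v ! k") auto
  with assms(2) show False by simp
qed

definition bv_xor :: "bool list \<Rightarrow> bool list \<Rightarrow> bool list" where
  "bv_xor v w = map2 (\<noteq>) v w"

lemma bv_xor_Nil [simp]: "bv_xor [] w = []"
  by (simp add: bv_xor_def)

lemma bv_xor_Cons [simp]: "bv_xor (a # v) (b # w) = (a \<noteq> b) # bv_xor v w"
  by (simp add: bv_xor_def)

lemma length_bv_xor [simp]: "length (bv_xor v w) = min (length v) (length w)"
  by (simp add: bv_xor_def)

lemma nth_bv_xor: "k < length v \<Longrightarrow> k < length w \<Longrightarrow> bv_xor v w ! k = (v ! k \<noteq> w ! k)"
  by (simp add: bv_xor_def)

lemma take_bv_xor: "take k (bv_xor v w) = bv_xor (take k v) (take k w)"
  by (simp add: bv_xor_def take_map take_zip)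

lemma bv_xor_eq_replicate_False_iff:
  "length v = length w \<Longrightarrow> bv_xor v w = replicate (length v) False \<longleftrightarrow> v = w"
  by (induction v w rule: list_induct2) auto

lemma bv_xor_replicate_False: "length v = n \<Longrightarrow> bv_xor v (replicate n False) = v"
  by (induction v arbitrary: n) auto

lemma bv_xor_replicate_True: "length v = n \<Longrightarrow> bv_xor v (replicate n True) = map Not v"
  by (induction v arbitrary: n) auto

fun explicit_attractor :: "signedness \<Rightarrow> direction \<Rightarrow> nat \<Rightarrow> bool list" where
  "explicit_attractor Unsigned Minimize n = replicate n False"
| "explicit_attractor Unsigned Maximize n = replicate n True"
| "explicit_attractor Signed Minimize n = True # replicate (n - 1) False"
| "explicit_attractor Signed Maximize n = False # replicate (n - 1) True"

lemma length_explicit_attractor: "n \<ge> 1 \<Longrightarrow> length (explicit_attractor s d n) = n"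
  by (cases s; cases d) auto

definition attr_distance :: "signedness \<Rightarrow> direction \<Rightarrow> bool list \<Rightarrow> int" where
  "attr_distance s d v = uval (bv_xor v (explicit_attractor s d (length v)))"

lemma bv_val_eq_attr_distance:
  assumes "length v = n" "n \<ge> 1"
  shows "bv_val s v = (case d of
      Minimize \<Rightarrow> bv_val s (explicit_attractor s d n) + attr_distance s d v
    | Maximize \<Rightarrow> bv_val s (explicit_attractor s d n) - attr_distance s d v)"
proof (cases s)
  case Unsigned
  then show ?thesis using assms uval_map_Not[of "replicate n False"]
    by (cases d) (simp_all add: attr_distance_def bv_val_Unsigned bv_xor_replicate_False
        bv_xor_replicate_True uval_map_Not)
next
  case Signed
  obtain b bs where v: "v = b # bs" using assms by (cases v) auto
  have "length bs = n - 1" using assms v by simp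
  then show ?thesis using Signed v uval_map_Not[of bs] uval_map_Not[of "replicate (n - 1) False"]
    by (cases d) (auto simp: attr_distance_def bv_val_Signed_Cons bv_xor_replicate_False
        bv_xor_replicate_True bit_val_def)
qed

lemma better_eq_iff_attr_distance_le:
  assumes "length v = n" "length w = n" "n \<ge> 1"
  shows "better_eq s d v w \<longleftrightarrow> attr_distance s d v \<le> attr_distance s d w"
  using bv_val_eq_attr_distance[OF assms(1,3), of s d] bv_val_eq_attr_distance[OF assms(2,3), of s d]
  by (cases d) (auto simp: better_eq_def)

lemma attr_distance_nonneg: "0 \<le> attr_distance s d v"
  by (simp add: attr_distance_def uval_nonneg)

lemma attr_distance_eq_0_iff:
  assumes "length v = n" "n \<ge> 1"
  shows "attr_distance s d v = 0 \<longleftrightarrow> v = explicit_attractor s d n"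
proof -
  let ?e = "explicit_attractor s d n"
  have "attr_distance s d v = 0 \<longleftrightarrow> bv_xor v ?e = replicate n False"
    using uval_inject[of "bv_xor v ?e" "replicate n False"] assms length_explicit_attractor
    by (auto simp: attr_distance_def)
  also have "\<dots> \<longleftrightarrow> v = ?e"
    using bv_xor_eq_replicate_False_iff[of v ?e] assms length_explicit_attractor by simp
  finally show ?thesis .
qed

lemma attr_distance_less_if_first_difference:
  assumes "length v = n" "length w = n" "n \<ge> 1" "k < n" "take k v = take k w"
    "v ! k = explicit_attractor s d n ! k" "w ! k \<noteq> explicit_attractor s d n ! k"
  shows "attr_distance s d v < attr_distance s d w"
proof -
  let ?e = "explicit_attractor s d n"
  have "length ?e = n" using assms(3) by (rule length_explicit_attractor)
  then have "uval (bv_xor v ?e) < uval (bv_xor w ?e)"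
    using assms by (intro uval_less_if_first_difference[where k = k]) (simp_all add: nth_bv_xor take_bv_xor)
  with assms(1,2) show ?thesis by (simp add: attr_distance_def)
qed

lemma attractor_eq_explicit_attractor:
  assumes "n \<ge> 1"
  shows "attractor s d n = explicit_attractor s d n"
proof -
  let ?e = "explicit_attractor s d n"
  let ?optimal = "\<lambda>a. length a = n \<and> (\<forall>w. length w = n \<longrightarrow> better_eq s d a w)"
  have e: "attr_distance s d ?e = 0"
    using attr_distance_eq_0_iff[OF length_explicit_attractor[OF assms] assms] by simp
  then have "?optimal ?e"
    using assms attr_distance_nonneg by (simp add: length_explicit_attractor better_eq_iff_attr_distance_le)
  then have opt: "?optimal (attractor s d n)"
    unfolding attractor_def by (rule someI)
  then have "better_eq s d (attractor s d n) ?e"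
    using length_explicit_attractor[OF assms] by blast
  then have "attr_distance s d (attractor s d n) \<le> attr_distance s d ?e"
    using opt assms by (simp add: better_eq_iff_attr_distance_le length_explicit_attractor)
  with e have "attr_distance s d (attractor s d n) = 0"
    using attr_distance_nonneg[of s d "attractor s d n"] by linarith
  then show ?thesis
    using opt attr_distance_eq_0_iff[of "attractor s d n" n s d] assms by simp
qed

lemma lex_max_model_agrees_with_attractor_at_first_difference:
  assumes "lex_max_model s d n phi cost M" "phi M'" "k < n"
    and "take k (cost M) = take k (cost M')" "cost M ! k \<noteq> cost M' ! k"
  shows "cost M ! k = attractor s d n ! k"
proof (rule ccontr)
  assume disagree: "cost M ! k \<noteq> attractor s d n ! k"
  with assms(5) have "cost M' ! k = attractor s d n ! k" by auto
  with assms(2,4) have "sat_prefix_attr s d n phi cost (cost M) k"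
    unfolding sat_prefix_attr_def by metis
  with assms(1,3) disagree show False
    unfolding lex_max_model_def lex_max_assignment_def by blast
qed

theorem theorem1:
  fixes phi :: "'m \<Rightarrow> bool" and cost :: "'m \<Rightarrow> bool list" and n :: nat
    and s :: signedness and d :: direction and M :: 'm
  assumes "n \<ge> 1"
    and "\<forall>M'. length (cost M') = n"
    and "phi M"
    and "lex_max_model s d n phi cost M"
  shows "optimal s d phi cost M"
  unfolding optimal_def
proof (intro conjI allI impI)
  show "phi M" by fact
  fix M' assume "phi M'"
  have len: "length (cost M) = n" "length (cost M') = n" using assms(2) by auto
  have "attr_distance s d (cost M) \<le> attr_distance s d (cost M')"
  proof (cases "cost M = cost M'")
    case False
    then obtain k where k: "k < n" "take k (cost M) = take k (cost M')"
      "cost M ! k \<noteq> cost M' ! k"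
      using first_difference[of "cost M" "cost M'"] len by auto
    then have agree: "cost M ! k = explicit_attractor s d n ! k"
      using lex_max_model_agrees_with_attractor_at_first_difference[OF assms(4) \<open>phi M'\<close> k]
        attractor_eq_explicit_attractor[OF assms(1)] by simp
    with k(3) have "cost M' ! k \<noteq> explicit_attractor s d n ! k" by simp
    with attr_distance_less_if_first_difference[OF len assms(1) k(1,2) agree]
    show ?thesis by simp
  qed simp
  with len assms(1) show "better_eq s d (cost M) (cost M')"
    by (simp add: better_eq_iff_attr_distance_le)
qed

end
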